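(* If $P$ is a projection algebra, then $\mathbb F(P)$ and $\mathbb M(P)$ are projection-generated DRC-semigroups, with $\mathbf P(\mathbb F(P))\cong\mathbf P(\mathbb M(P))\cong P$ as projection algebras.
   Context: Maps are written on the right and composed left to right. A projection algebra is a set $P$ with maps $\theta_p,\delta_p:P\to P$ ($p\in P$) such that for all $p,q$: $p\theta_p=p$, $p\delta_p=p$; $p\theta_{q\theta_p}=q\theta_p$, $p\delta_{q\delta_p}=q\delta_p$; $\theta_q\theta_{q\theta_p}=\theta_q\theta_p$, $\delta_q\delta_{q\delta_p}=\delta_q\delta_p$; $\theta_p\delta_p=\theta_p$, $\delta_p\theta_p=\delta_p$; $\theta_{p\delta_q}\theta_p=\theta_q\theta_p$, $\delta_{p\theta_q}\delta_p=\delta_q\delta_p$. Isomorphisms are bijections preserving all $\theta_p,\delta_p$ operations. Write $p\,\mathscr F\,q$ iff $p=q\delta_p$ and $q=p\theta_q$. A DRC-semigroup is $(S,\cdot,D,R)$, $(S,\cdot)$ a semigroup, $D,R:S\to S$ with, for all $a,b$: $D(a)a=a$, $aR(a)=a$; $D(ab)=D(aD(b))$, $R(ab)=R(R(a)b)$; $D(ab)=D(a)D(ab)D(a)$, $R(ab)=R(b)R(ab)R(b)$; $R(D(a))=D(a)$, $D(R(a))=R(a)$. $\mathbf P(S)=\{D(a):a\in S\}$ is a projection algebra under $q\theta_p=R(qp)$, $q\delta_p=D(pq)$; $S$ is projection-generated if $\mathbf P(S)$ generates $S$ as a semigroup. $\mathbb F(P)$ is the semigroup presented by generators $x_p$ ($p\in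 P$) and relations $x_p^2=x_p$, $x_px_q=x_px_{p\theta_q}$, $x_px_q=x_{q\delta_p}x_q$ ($p,q\in P$). Every element of $\mathbb F(P)$ equals $\overline{x_{p_1}\cdots x_{p_k}}$ for some $p_1\mathscr F\cdots\mathscr F p_k$, and $p_1,p_k$ are determined by the element; unary operations are $D(\overline{x_{p_1}\cdots x_{p_k}})=\overline{x_{p_1}}$, $R(\overline{x_{p_1}\cdots x_{p_k}})=\overline{x_{p_k}}$. $\mathbb M(P)$ is the subsemigroup of $\mathcal T_P\times\mathcal T_P^{\mathrm{op}}$ ($\mathcal T_P$ the full transformation semigroup on $P$, product $(\alpha,\alpha')(\beta,\beta')=(\alpha\beta,\beta'\alpha')$) generated by $\hat p=(\theta_p,\delta_p)$, $p\in P$; every element equals $\hat p_1\cdots\hat p_k$ with $p_1\mathscr F\cdots\mathscr F p_k$, with $p_1,p_k$ determined, and $D(\hat p_1\cdots\hat p_k)=\hat p_1$, $R(\hat p_1\cdots\hat p_k)=\hat p_k$. *)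

theory Defs
  imports Main "HOL-Library.FuncSet"
begin

text \<open>Convention: a projection algebra is a carrier P with operations
  th p q = q\<theta>_p and dl p q = q\<delta>_p (maps written on the right,
  composed left to right).\<close>

definition proj_alg :: "'a set \<Rightarrow> ('a \<Rightarrow> 'a \<Rightarrow> 'a) \<Rightarrow> ('a \<Rightarrow> 'a \<Rightarrow> 'a) \<Rightarrow> bool" where
  "proj_alg P th dl \<longleftrightarrow>
     (\<forall>p\<in>P. \<forall>q\<in>P. th p q \<in> P \<and> dl p q \<in> P) \<and>
     (\<forall>p\<in>P. th p p = p \<and> dl p p = p) \<and>
     (\<forall>p\<in>P. \<forall>q\<in>P. th (th p q) p = th p q \<and> dl (dl p q) p = dl p q) \<and>
     (\<forall>p\<in>P. \<forall>q\<in>P. \<forall>r\<in>P. th (th p q) (th q r) = th p (th q r)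
                         \<and> dl (dl p q) (dl q r) = dl p (dl q r)) \<and>
     (\<forall>p\<in>P. \<forall>r\<in>P. dl p (th p r) = th p r \<and> th p (dl p r) = dl p r) \<and>
     (\<forall>p\<in>P. \<forall>q\<in>P. \<forall>r\<in>P. th p (th (dl q p) r) = th p (th q r)
                         \<and> dl p (dl (th q p) r) = dl p (dl q r))"

definition pa_iso :: "'a set \<Rightarrow> ('a \<Rightarrow> 'a \<Rightarrow> 'a) \<Rightarrow> ('a \<Rightarrow> 'a \<Rightarrow> 'a) \<Rightarrow>
    'b set \<Rightarrow> ('b \<Rightarrow> 'b \<Rightarrow> 'b) \<Rightarrow> ('b \<Rightarrow> 'b \<Rightarrow> 'b) \<Rightarrow> bool" where
  "pa_iso P1 th1 dl1 P2 th2 dl2 \<longleftrightarrow>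
     (\<exists>f. bij_betw f P1 P2 \<and>
          (\<forall>p\<in>P1. \<forall>q\<in>P1. f (th1 p q) = th2 (f p) (f q) \<and> f (dl1 p q) = dl2 (f p) (f q)))"

definition Frel :: "('a \<Rightarrow> 'a \<Rightarrow> 'a) \<Rightarrow> ('a \<Rightarrow> 'a \<Rightarrow> 'a) \<Rightarrow> 'a \<Rightarrow> 'a \<Rightarrow> bool" where
  "Frel th dl p q \<longleftrightarrow> p = dl p q \<and> q = th q p"

definition fchain :: "'a set \<Rightarrow> ('a \<Rightarrow> 'a \<Rightarrow> 'a) \<Rightarrow> ('a \<Rightarrow> 'a \<Rightarrow> 'a) \<Rightarrow> 'a list \<Rightarrow> bool" where
  "fchain P th dl ps \<longleftrightarrow> ps \<noteq> [] \<and> set ps \<subseteq> P \<and>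
     (\<forall>i. Suc i < length ps \<longrightarrow> Frel th dl (ps ! i) (ps ! Suc i))"

definition semigroup_on :: "'s set \<Rightarrow> ('s \<Rightarrow> 's \<Rightarrow> 's) \<Rightarrow> bool" where
  "semigroup_on S m \<longleftrightarrow> (\<forall>a\<in>S. \<forall>b\<in>S. m a b \<in> S) \<and>
     (\<forall>a\<in>S. \<forall>b\<in>S. \<forall>c\<in>S. m (m a b) c = m a (m b c))"

definition drc_semigroup :: "'s set \<Rightarrow> ('s \<Rightarrow> 's \<Rightarrow> 's) \<Rightarrow> ('s \<Rightarrow> 's) \<Rightarrow> ('s \<Rightarrow> 's) \<Rightarrow> bool" where
  "drc_semigroup S m D R \<longleftrightarrow> semigroup_on S m \<and>
     (\<forall>a\<in>S. D a \<in> S \<and> R a \<in> S) \<and>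
     (\<forall>a\<in>S. m (D a) a = a \<and> m a (R a) = a) \<and>
     (\<forall>a\<in>S. \<forall>b\<in>S. D (m a b) = D (m a (D b)) \<and> R (m a b) = R (m (R a) b)) \<and>
     (\<forall>a\<in>S. \<forall>b\<in>S. D (m a b) = m (m (D a) (D (m a b))) (D a)
                   \<and> R (m a b) = m (m (R b) (R (m a b))) (R b)) \<and>
     (\<forall>a\<in>S. R (D a) = D a \<and> D (R a) = R a)"

definition projs :: "'s set \<Rightarrow> ('s \<Rightarrow> 's) \<Rightarrow> 's set" where
  "projs S D = D ` S"

definition pth :: "('s \<Rightarrow> 's \<Rightarrow> 's) \<Rightarrow> ('s \<Rightarrow> 's) \<Rightarrow> 's \<Rightarrow> 's \<Rightarrow> 's" where
  "pth m R p q = R (m q p)"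

definition pdl :: "('s \<Rightarrow> 's \<Rightarrow> 's) \<Rightarrow> ('s \<Rightarrow> 's) \<Rightarrow> 's \<Rightarrow> 's \<Rightarrow> 's" where
  "pdl m D p q = D (m p q)"

inductive_set sgen :: "'s set \<Rightarrow> ('s \<Rightarrow> 's \<Rightarrow> 's) \<Rightarrow> 's set" for X m where
  base: "a \<in> X \<Longrightarrow> a \<in> sgen X m"
| mult: "a \<in> sgen X m \<Longrightarrow> b \<in> sgen X m \<Longrightarrow> m a b \<in> sgen X m"

definition proj_generated :: "'s set \<Rightarrow> ('s \<Rightarrow> 's \<Rightarrow> 's) \<Rightarrow> ('s \<Rightarrow> 's) \<Rightarrow> bool" where
  "proj_generated S m D \<longleftrightarrow> sgen (projs S D) m = S"

definition chainD :: "'a set \<Rightarrow> ('a \<Rightarrow> 'a \<Rightarrow> 'a) \<Rightarrow> ('a \<Rightarrow> 'a \<Rightarrow> 'a) \<Rightarrow> ('a \<Rightarrow> 's)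
    \<Rightarrow> ('a list \<Rightarrow> 's) \<Rightarrow> 's \<Rightarrow> 's" where
  "chainD P th dl gen prd a = gen (THE p. \<exists>ps. fchain P th dl ps \<and> hd ps = p \<and> prd ps = a)"

definition chainR :: "'a set \<Rightarrow> ('a \<Rightarrow> 'a \<Rightarrow> 'a) \<Rightarrow> ('a \<Rightarrow> 'a \<Rightarrow> 'a) \<Rightarrow> ('a \<Rightarrow> 's)
    \<Rightarrow> ('a list \<Rightarrow> 's) \<Rightarrow> 's \<Rightarrow> 's" where
  "chainR P th dl gen prd a = gen (THE p. \<exists>ps. fchain P th dl ps \<and> last ps = p \<and> prd ps = a)"

inductive fcong :: "'a set \<Rightarrow> ('a \<Rightarrow> 'a \<Rightarrow> 'a) \<Rightarrow> ('a \<Rightarrow> 'a \<Rightarrow> 'a) \<Rightarrow> 'a list \<Rightarrow> 'a list \<Rightarrow> bool"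
  for P th dl where
  rel_idem: "p \<in> P \<Longrightarrow> fcong P th dl [p, p] [p]"
| rel_th: "p \<in> P \<Longrightarrow> q \<in> P \<Longrightarrow> fcong P th dl [p, q] [p, th q p]"
| rel_dl: "p \<in> P \<Longrightarrow> q \<in> P \<Longrightarrow> fcong P th dl [p, q] [dl p q, q]"
| refl: "u \<noteq> [] \<Longrightarrow> set u \<subseteq> P \<Longrightarrow> fcong P th dl u u"
| sym: "fcong P th dl u v \<Longrightarrow> fcong P th dl v u"
| trans: "fcong P th dl u v \<Longrightarrow> fcong P th dl v w \<Longrightarrow> fcong P th dl u w"
| ctx: "fcong P th dl u v \<Longrightarrow> set xs \<subseteq> P \<Longrightarrow> set ys \<subseteq> P \<Longrightarrow>
        fcong P th dl (xs @ u @ ys) (xs @ v @ ys)"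

definition fclass :: "'a set \<Rightarrow> ('a \<Rightarrow> 'a \<Rightarrow> 'a) \<Rightarrow> ('a \<Rightarrow> 'a \<Rightarrow> 'a) \<Rightarrow> 'a list \<Rightarrow> 'a list set" where
  "fclass P th dl w = {v. fcong P th dl w v}"

definition Fcar :: "'a set \<Rightarrow> ('a \<Rightarrow> 'a \<Rightarrow> 'a) \<Rightarrow> ('a \<Rightarrow> 'a \<Rightarrow> 'a) \<Rightarrow> 'a list set set" where
  "Fcar P th dl = {fclass P th dl w | w. w \<noteq> [] \<and> set w \<subseteq> P}"

definition Fmult :: "'a set \<Rightarrow> ('a \<Rightarrow> 'a \<Rightarrow> 'a) \<Rightarrow> ('a \<Rightarrow> 'a \<Rightarrow> 'a) \<Rightarrow>
    'a list set \<Rightarrow> 'a list set \<Rightarrow> 'a list set" where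
  "Fmult P th dl A B = fclass P th dl ((SOME a. a \<in> A) @ (SOME b. b \<in> B))"

definition FD :: "'a set \<Rightarrow> ('a \<Rightarrow> 'a \<Rightarrow> 'a) \<Rightarrow> ('a \<Rightarrow> 'a \<Rightarrow> 'a) \<Rightarrow> 'a list set \<Rightarrow> 'a list set" where
  "FD P th dl = chainD P th dl (\<lambda>p. fclass P th dl [p]) (fclass P th dl)"

definition FR :: "'a set \<Rightarrow> ('a \<Rightarrow> 'a \<Rightarrow> 'a) \<Rightarrow> ('a \<Rightarrow> 'a \<Rightarrow> 'a) \<Rightarrow> 'a list set \<Rightarrow> 'a list set" where
  "FR P th dl = chainR P th dl (\<lambda>p. fclass P th dl [p]) (fclass P th dl)"

text \<open>Transformations of P are represented as extensional functions (undefined off P).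
  Composition left to right: \<alpha>\<beta> = compose P \<beta> \<alpha>; product
  (\<alpha>,\<alpha>')(\<beta>,\<beta>') = (\<alpha>\<beta>, \<beta>'\<alpha>').\<close>
definition Mmult :: "'a set \<Rightarrow> ('a \<Rightarrow> 'a) \<times> ('a \<Rightarrow> 'a) \<Rightarrow> ('a \<Rightarrow> 'a) \<times> ('a \<Rightarrow> 'a) \<Rightarrow> ('a \<Rightarrow> 'a) \<times> ('a \<Rightarrow> 'a)" where
  "Mmult P x y = (compose P (fst y) (fst x), compose P (snd x) (snd y))"

definition hat :: "'a set \<Rightarrow> ('a \<Rightarrow> 'a \<Rightarrow> 'a) \<Rightarrow> ('a \<Rightarrow> 'a \<Rightarrow> 'a) \<Rightarrow> 'a \<Rightarrow> ('a \<Rightarrow> 'a) \<times> ('a \<Rightarrow> 'a)" where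
  "hat P th dl p = (restrict (th p) P, restrict (dl p) P)"

definition Mcar :: "'a set \<Rightarrow> ('a \<Rightarrow> 'a \<Rightarrow> 'a) \<Rightarrow> ('a \<Rightarrow> 'a \<Rightarrow> 'a) \<Rightarrow> (('a \<Rightarrow> 'a) \<times> ('a \<Rightarrow> 'a)) set" where
  "Mcar P th dl = sgen (hat P th dl ` P) (Mmult P)"

definition Mword :: "'a set \<Rightarrow> ('a \<Rightarrow> 'a \<Rightarrow> 'a) \<Rightarrow> ('a \<Rightarrow> 'a \<Rightarrow> 'a) \<Rightarrow> 'a list \<Rightarrow> ('a \<Rightarrow> 'a) \<times> ('a \<Rightarrow> 'a)" where
  "Mword P th dl ps = foldl (Mmult P) (hat P th dl (hd ps)) (map (hat P th dl) (tl ps))"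

definition MD :: "'a set \<Rightarrow> ('a \<Rightarrow> 'a \<Rightarrow> 'a) \<Rightarrow> ('a \<Rightarrow> 'a \<Rightarrow> 'a) \<Rightarrow>
    ('a \<Rightarrow> 'a) \<times> ('a \<Rightarrow> 'a) \<Rightarrow> ('a \<Rightarrow> 'a) \<times> ('a \<Rightarrow> 'a)" where
  "MD P th dl = chainD P th dl (hat P th dl) (Mword P th dl)"

definition MR :: "'a set \<Rightarrow> ('a \<Rightarrow> 'a \<Rightarrow> 'a) \<Rightarrow> ('a \<Rightarrow> 'a \<Rightarrow> 'a) \<Rightarrow>
    ('a \<Rightarrow> 'a) \<times> ('a \<Rightarrow> 'a) \<Rightarrow> ('a \<Rightarrow> 'a) \<times> ('a \<Rightarrow> 'a)" where
  "MR P th dl = chainR P th dl (hat P th dl) (Mword P th dl)"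

end

theory Submission
  imports Defs
begin

(* A nonempty word w = p1 ... pk over P acts on P by \<theta>_p1 ... \<theta>_pk and by \<delta>_pk ... \<delta>_p1,
   and the defining relations of F(P) preserve both actions, so M(P) is a quotient of F(P).
   Put D(w) = pk \<delta>_p(k-1) ... \<delta>_p1 and dually R(w) = p1 \<theta>_p2 ... \<theta>_pk.  Every value of the
   \<delta>-action of w lies below D(w), so D(w) (and dually R(w)) depends only on the action.
   A \<theta>-sweep followed by a \<delta>-sweep rewrites w, modulo the relations, into an F-chain, whose
   first and last letters must then be D(w) and R(w).  Hence on every quotient of the word
   semigroup lying between F(P) and M(P) the chain-based D and R are well defined, the DRC
   axioms reduce to the word identities D(w) w = w, w R(w) = w and d x d = x for x \<le> d, and
   p \<mapsto> [p] is an isomorphism of P onto the projections. *)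

definition words :: "'a set \<Rightarrow> 'a list set" where
  "words P = {w. w \<noteq> [] \<and> set w \<subseteq> P}"

lemma in_words_iff: "w \<in> words P \<longleftrightarrow> w \<noteq> [] \<and> set w \<subseteq> P"
  by (simp add: words_def)

lemma words_singleton_iff [simp]: "[p] \<in> words P \<longleftrightarrow> p \<in> P"
  by (simp add: words_def)

lemma words_append: "u \<in> words P \<Longrightarrow> v \<in> words P \<Longrightarrow> u @ v \<in> words P"
  by (simp add: words_def)

lemma words_rev_iff [simp]: "rev w \<in> words P \<longleftrightarrow> w \<in> words P"
  by (simp add: words_def)

lemma fchain_in_words: "fchain P th dl ps \<Longrightarrow> ps \<in> words P"
  by (simp add: fchain_def words_def)

lemma fchain_singleton_iff [simp]: "fchain P th dl [p] \<longleftrightarrow> p \<in> P"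
  by (simp add: fchain_def)

lemma Frel_iff: "Frel th dl p q \<longleftrightarrow> dl p q = p \<and> th q p = q"
  unfolding Frel_def by auto

lemma fchain_Cons_Cons_iff:
  "fchain P th dl (p # q # r) \<longleftrightarrow> p \<in> P \<and> Frel th dl p q \<and> fchain P th dl (q # r)"
  by (auto simp: fchain_def nth_Cons less_Suc_eq_0_disj split: nat.split)

lemma sgen_singletons_eq_image:
  assumes append: "\<And>u v. u \<in> words P \<Longrightarrow> v \<in> words P \<Longrightarrow> m (f u) (f v) = f (u @ v)"
  shows "sgen ((\<lambda>p. f [p]) ` P) m = f ` words P"
proof
  show "sgen ((\<lambda>p. f [p]) ` P) m \<subseteq> f ` words P"
  proof
    fix a assume "a \<in> sgen ((\<lambda>p. f [p]) ` P) m"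
    then show "a \<in> f ` words P"
    proof (induction rule: sgen.induct)
      case (base a)
      then show ?case by force
    next
      case (mult a b)
      then obtain u v where "u \<in> words P" "v \<in> words P" "a = f u" "b = f v" by blast
      then have "m a b = f (u @ v)" "u @ v \<in> words P" using append words_append by simp_all
      then show ?case by blast
    qed
  qed
  have "f w \<in> sgen ((\<lambda>p. f [p]) ` P) m" if "w \<noteq> []" "set w \<subseteq> P" for w
    using that
  proof (induction w rule: list_nonempty_induct)
    case (single p)
    then show ?case by (simp add: sgen.base)
  next
    case (cons p w)
    then have "f (p # w) = m (f [p]) (f w)" using append[of "[p]" w] by (simp add: in_words_iff)
    then show ?case using cons by (simp add: sgen.base sgen.mult)
  qed
  then show "f ` words P \<subseteq> sgen ((\<lambda>p. f [p]) ` P) m" by (auto simp: in_words_iff)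
qed

lemma pa_iso_trans:
  assumes "pa_iso A ta da B tb db" "pa_iso B tb db C tc dc"
  shows "pa_iso A ta da C tc dc"
proof -
  obtain f where f: "bij_betw f A B"
    "\<forall>p\<in>A. \<forall>q\<in>A. f (ta p q) = tb (f p) (f q) \<and> f (da p q) = db (f p) (f q)"
    using assms(1) unfolding pa_iso_def by blast
  obtain g where g: "bij_betw g B C"
    "\<forall>p\<in>B. \<forall>q\<in>B. g (tb p q) = tc (g p) (g q) \<and> g (db p q) = dc (g p) (g q)"
    using assms(2) unfolding pa_iso_def by blast
  have "\<forall>p\<in>A. \<forall>q\<in>A. (g \<circ> f) (ta p q) = tc ((g \<circ> f) p) ((g \<circ> f) q)
                      \<and> (g \<circ> f) (da p q) = dc ((g \<circ> f) p) ((g \<circ> f) q)"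
    using f g bij_betwE[OF f(1)] by simp
  then show ?thesis unfolding pa_iso_def using bij_betw_trans[OF f(1) g(1)] by blast
qed

lemma pa_iso_sym:
  assumes closed: "\<forall>p\<in>A. \<forall>q\<in>A. ta p q \<in> A \<and> da p q \<in> A"
    and iso: "pa_iso A ta da B tb db"
  shows "pa_iso B tb db A ta da"
proof -
  obtain f where f: "bij_betw f A B"
    "\<forall>p\<in>A. \<forall>q\<in>A. f (ta p q) = tb (f p) (f q) \<and> f (da p q) = db (f p) (f q)"
    using iso unfolding pa_iso_def by blast
  let ?g = "inv_into A f"
  have "?g (tb a b) = ta (?g a) (?g b) \<and> ?g (db a b) = da (?g a) (?g b)"
    if ab: "a \<in> B" "b \<in> B" for a b
  proof -
    obtain p q where pq: "p \<in> A" "q \<in> A" "a = f p" "b = f q"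
      using ab f(1) unfolding bij_betw_def by blast
    then have "tb a b = f (ta p q)" "db a b = f (da p q)" using f(2) by simp_all
    then show ?thesis using pq closed bij_betw_inv_into_left[OF f(1)] by simp
  qed
  then show ?thesis unfolding pa_iso_def using bij_betw_inv_into[OF f(1)] by blast
qed

(* Maps are written on the right: theta_word th [p1, ..., pk] x = x \<theta>_p1 ... \<theta>_pk and
   delta_word dl [p1, ..., pk] x = x \<delta>_pk ... \<delta>_p1 are the two components of the element
   p1^ ... pk^ of M(P); word_D and word_R are the values of D and R on it. *)

definition theta_word :: "('a \<Rightarrow> 'a \<Rightarrow> 'a) \<Rightarrow> 'a list \<Rightarrow> 'a \<Rightarrow> 'a" where
  "theta_word th w x = foldl (\<lambda>y p. th p y) x w"

definition delta_word :: "('a \<Rightarrow> 'a \<Rightarrow> 'a) \<Rightarrow> 'a list \<Rightarrow> 'a \<Rightarrow> 'a" where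
  "delta_word dl w x = foldr dl w x"

definition word_D :: "('a \<Rightarrow> 'a \<Rightarrow> 'a) \<Rightarrow> 'a list \<Rightarrow> 'a" where
  "word_D dl w = delta_word dl w (last w)"

definition word_R :: "('a \<Rightarrow> 'a \<Rightarrow> 'a) \<Rightarrow> 'a list \<Rightarrow> 'a" where
  "word_R th w = theta_word th w (hd w)"

lemma theta_word_simps [simp]:
  "theta_word th [] x = x"
  "theta_word th (p # w) x = theta_word th w (th p x)"
  "theta_word th (u @ v) x = theta_word th v (theta_word th u x)"
  by (simp_all add: theta_word_def)

lemma delta_word_simps [simp]:
  "delta_word dl [] x = x"
  "delta_word dl (p # w) x = dl p (delta_word dl w x)"
  "delta_word dl (u @ v) x = delta_word dl u (delta_word dl v x)"
  by (simp_all add: delta_word_def)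

lemma theta_word_eq_delta_word_rev: "theta_word f w x = delta_word f (rev w) x"
  by (simp add: theta_word_def delta_word_def foldr_conv_foldl)

lemma word_R_eq_word_D_rev: "w \<noteq> [] \<Longrightarrow> word_R f w = word_D f (rev w)"
  by (simp add: word_R_def word_D_def theta_word_eq_delta_word_rev last_rev)

lemma word_D_snoc: "word_D dl (u @ [d]) = delta_word dl u (dl d d)"
  by (simp add: word_D_def)

lemma word_R_Cons: "word_R th (r # v) = theta_word th v (th r r)"
  by (simp add: word_R_def)

lemma word_D_singleton [simp]: "word_D dl [p] = dl p p"
  by (simp add: word_D_def)

lemma word_R_singleton [simp]: "word_R th [p] = th p p"
  by (simp add: word_R_def)

lemma word_D_append: "v \<noteq> [] \<Longrightarrow> word_D dl (u @ v) = delta_word dl u (word_D dl v)"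
  by (simp add: word_D_def)

lemma word_R_append: "u \<noteq> [] \<Longrightarrow> word_R th (u @ v) = theta_word th v (word_R th u)"
  by (simp add: word_R_def)

definition same_action :: "'a set \<Rightarrow> ('a \<Rightarrow> 'a \<Rightarrow> 'a) \<Rightarrow> ('a \<Rightarrow> 'a \<Rightarrow> 'a) \<Rightarrow> 'a list \<Rightarrow> 'a list \<Rightarrow> bool"
  where "same_action P th dl u v \<longleftrightarrow>
    (\<forall>x\<in>P. theta_word th u x = theta_word th v x \<and> delta_word dl u x = delta_word dl v x)"

fun theta_linked :: "('a \<Rightarrow> 'a \<Rightarrow> 'a) \<Rightarrow> 'a list \<Rightarrow> bool" where
  "theta_linked th (x # y # ys) \<longleftrightarrow> th y x = y \<and> theta_linked th (y # ys)"
| "theta_linked th _ \<longleftrightarrow> True"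

locale proj_algebra =
  fixes P :: "'a set" and th dl :: "'a \<Rightarrow> 'a \<Rightarrow> 'a"
  assumes proj_alg: "proj_alg P th dl"
begin

lemma th_closed [simp]: "a \<in> P \<Longrightarrow> b \<in> P \<Longrightarrow> th a b \<in> P"
  and dl_closed [simp]: "a \<in> P \<Longrightarrow> b \<in> P \<Longrightarrow> dl a b \<in> P"
  and th_refl [simp]: "a \<in> P \<Longrightarrow> th a a = a"
  and dl_refl [simp]: "a \<in> P \<Longrightarrow> dl a a = a"
  and th_absorb: "a \<in> P \<Longrightarrow> b \<in> P \<Longrightarrow> th (th a b) a = th a b"
  and th_th_reduce: "a \<in> P \<Longrightarrow> b \<in> P \<Longrightarrow> c \<in> P \<Longrightarrow> th (th a b) (th b c) = th a (th b c)"
  and dl_dl_reduce: "a \<in> P \<Longrightarrow> b \<in> P \<Longrightarrow> c \<in> P \<Longrightarrow> dl (dl a b) (dl b c) = dl a (dl b c)"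
  and dl_th_fixed: "a \<in> P \<Longrightarrow> c \<in> P \<Longrightarrow> dl a (th a c) = th a c"
  and th_dl_fixed: "a \<in> P \<Longrightarrow> c \<in> P \<Longrightarrow> th a (dl a c) = dl a c"
  and th_th_dl: "a \<in> P \<Longrightarrow> b \<in> P \<Longrightarrow> c \<in> P \<Longrightarrow> th a (th (dl b a) c) = th a (th b c)"
  and dl_dl_th: "a \<in> P \<Longrightarrow> b \<in> P \<Longrightarrow> c \<in> P \<Longrightarrow> dl a (dl (th b a) c) = dl a (dl b c)"
  using proj_alg unfolding proj_alg_def by blast+

lemma dual: "proj_algebra P dl th"
  using proj_alg by unfold_locales (auto simp: proj_alg_def)

lemma th_idem [simp]: "a \<in> P \<Longrightarrow> x \<in> P \<Longrightarrow> th a (th a x) = th a x"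
  and dl_idem [simp]: "a \<in> P \<Longrightarrow> x \<in> P \<Longrightarrow> dl a (dl a x) = dl a x"
  by (metis dl_th_fixed th_dl_fixed th_closed dl_closed)+

lemma th_th_absorb: "p \<in> P \<Longrightarrow> q \<in> P \<Longrightarrow> th (th q p) p = th q p"
  using th_th_reduce[of q p p] by simp

lemma th_dl_eq_th: "p \<in> P \<Longrightarrow> q \<in> P \<Longrightarrow> th q (dl p q) = th q p"
  using th_th_dl[of q p p] th_absorb[of p "dl p q"] th_dl_fixed[of p q] by simp

(* dl a x = x expresses x \<le> a (in P(S): x = D(ax)). *)

lemma below_antisym: "a \<in> P \<Longrightarrow> b \<in> P \<Longrightarrow> dl b a = a \<Longrightarrow> dl a b = b \<Longrightarrow> a = b"
  by (metis th_absorb th_dl_fixed)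

lemma th_fixed_if_dl_fixed: "a \<in> P \<Longrightarrow> x \<in> P \<Longrightarrow> dl a x = x \<Longrightarrow> th a x = x"
  by (metis th_dl_fixed)

lemma th_fixed_below:
  assumes "x \<in> P" "q \<in> P" "p \<in> P" and "dl q x = x" and "th q p = q"
  shows "th x p = x"
proof -
  have "th x p = th x (th x p)" using assms by simp
  also have "\<dots> = th x q" using th_th_dl[of x q p] assms by simp
  also have "\<dots> = x" using th_absorb[of q x] th_dl_fixed[of q x] assms by simp
  finally show ?thesis .
qed

lemma theta_word_closed [simp]: "set w \<subseteq> P \<Longrightarrow> x \<in> P \<Longrightarrow> theta_word th w x \<in> P"
  by (induction w arbitrary: x) auto

lemma delta_word_closed [simp]: "set w \<subseteq> P \<Longrightarrow> x \<in> P \<Longrightarrow> delta_word dl w x \<in> P"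
  by (induction w) auto

lemma word_D_closed: "w \<in> words P \<Longrightarrow> word_D dl w \<in> P"
  by (auto simp: word_D_def in_words_iff intro: delta_word_closed last_in_set)

lemma word_R_closed: "w \<in> words P \<Longrightarrow> word_R th w \<in> P"
  by (auto simp: word_R_def in_words_iff intro: theta_word_closed hd_in_set)

lemma fcong_words: "fcong P th dl u v \<Longrightarrow> u \<in> words P \<and> v \<in> words P"
  by (induction rule: fcong.induct) (auto simp: words_def)

declare fcong.trans [trans]

lemma fcong_same_action: "fcong P th dl u v \<Longrightarrow> same_action P th dl u v"
proof (induction rule: fcong.induct)
  case (rel_th p q)
  then show ?case by (simp add: same_action_def th_th_reduce dl_dl_th)
next
  case (rel_dl p q)
  then show ?case by (simp add: same_action_def th_th_dl dl_dl_reduce)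
next
  case (ctx u v xs ys)
  then show ?case by (simp add: same_action_def)
qed (simp_all add: same_action_def)

lemma delta_word_below_word_D:
  assumes "w \<in> words P" "y \<in> P"
  shows "dl (word_D dl w) (delta_word dl w y) = delta_word dl w y"
proof -
  have "w \<noteq> []" "set w \<subseteq> P" using assms(1) by (simp_all add: in_words_iff)
  then show ?thesis
  proof (induction w rule: list_nonempty_induct)
    case (single p)
    then show ?case using assms(2) by simp
  next
    case (cons p w)
    let ?e = "word_D dl w" and ?z = "delta_word dl w y"
    have P: "p \<in> P" "?e \<in> P" "?z \<in> P"
      using cons assms(2) word_D_closed[of w] by (simp_all add: in_words_iff)
    have IH: "dl ?e ?z = ?z" using cons by (simp add: in_words_iff)
    have D: "word_D dl (p # w) = dl p ?e" using cons.hyps by (simp add: word_D_def)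
    have "dl p ?z = dl (dl p ?e) ?z"
      using dl_dl_reduce[of p ?e ?z] P unfolding IH by simp
    then have "dl (dl p ?e) (dl p ?z) = dl p ?z" using dl_idem[of "dl p ?e" ?z] P by simp
    then show ?case unfolding D by simp
  qed
qed

lemma word_D_eq_if_delta_word_eq:
  assumes u: "u \<in> words P" and v: "v \<in> words P"
    and eq: "\<And>y. y \<in> P \<Longrightarrow> delta_word dl u y = delta_word dl v y"
  shows "word_D dl u = word_D dl v"
proof (rule below_antisym)
  have last: "last u \<in> P" "last v \<in> P" using u v last_in_set by (auto simp: in_words_iff)
  show "word_D dl u \<in> P" "word_D dl v \<in> P" using u v by (simp_all add: word_D_closed)
  show "dl (word_D dl v) (word_D dl u) = word_D dl u"
    using delta_word_below_word_D[OF v last(1)] eq[OF last(1)] by (simp add: word_D_def)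
  show "dl (word_D dl u) (word_D dl v) = word_D dl v"
    using delta_word_below_word_D[OF u last(2)] eq[OF last(2)] by (simp add: word_D_def)
qed

lemma theta_word_below_word_R:
  assumes "w \<in> words P" "y \<in> P"
  shows "th (word_R th w) (theta_word th w y) = theta_word th w y"
proof -
  interpret dual: proj_algebra P dl th by (rule dual)
  have "word_R th w = word_D th (rev w)" using assms(1) by (simp add: word_R_eq_word_D_rev in_words_iff)
  then show ?thesis using dual.delta_word_below_word_D[of "rev w" y] assms
    unfolding theta_word_eq_delta_word_rev by simp
qed

lemma word_R_eq_if_theta_word_eq:
  assumes "u \<in> words P" "v \<in> words P"
    and eq: "\<And>y. y \<in> P \<Longrightarrow> theta_word th u y = theta_word th v y"
  shows "word_R th u = word_R th v"
proof -
  interpret dual: proj_algebra P dl th by (rule dual)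
  have "word_D th (rev u) = word_D th (rev v)"
  proof (rule dual.word_D_eq_if_delta_word_eq)
    show "rev u \<in> words P" "rev v \<in> words P" using assms(1,2) by simp_all
    show "delta_word th (rev u) y = delta_word th (rev v) y" if "y \<in> P" for y
      using eq[OF that] by (simp add: theta_word_eq_delta_word_rev)
  qed
  moreover have "word_R th u = word_D th (rev u)" "word_R th v = word_D th (rev v)"
    using assms(1,2) by (simp_all add: word_R_eq_word_D_rev in_words_iff)
  ultimately show ?thesis by simp
qed

lemma same_action_word_D_word_R:
  assumes "u \<in> words P" "v \<in> words P" "same_action P th dl u v"
  shows "word_D dl u = word_D dl v \<and> word_R th u = word_R th v"
  using word_D_eq_if_delta_word_eq[OF assms(1,2)] word_R_eq_if_theta_word_eq[OF assms(1,2)] assms(3)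
  unfolding same_action_def by blast

lemma fchain_word_D_word_R:
  "fchain P th dl ps \<Longrightarrow> word_D dl ps = hd ps \<and> word_R th ps = last ps"
proof (induction ps rule: induct_list012)
  case (3 x y zs)
  have x: "x \<in> P" and Fxy: "dl x y = x" "th y x = y" and yzs: "fchain P th dl (y # zs)"
    using "3.prems" by (simp_all add: fchain_Cons_Cons_iff Frel_iff)
  have IH: "word_D dl (y # zs) = y" "word_R th (y # zs) = last (y # zs)"
    using "3.IH"(2)[OF yzs] by simp_all
  have "word_D dl (x # y # zs) = dl x (word_D dl (y # zs))" by (simp add: word_D_def)
  also have "\<dots> = x" using IH(1) Fxy(1) by simp
  finally have "word_D dl (x # y # zs) = x" .
  moreover have "word_R th (x # y # zs) = word_R th (y # zs)"
    using x yzs Fxy(2) by (simp add: word_R_def fchain_def)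
  ultimately show ?case using IH(2) by simp
qed (simp_all add: fchain_def)

(* Reduction to an F-chain: the \<theta>-sweep, left to right, achieves q = p \<theta>_q for consecutive
   letters p q; the \<delta>-sweep, right to left, replaces p by q \<delta>_p, which achieves p = q \<delta>_p
   and keeps the first half by th_fixed_below. *)

lemma theta_sweep:
  assumes "x \<in> P" "set ws \<subseteq> P"
  shows "\<exists>ys. fcong P th dl (x # ws) ys \<and> theta_linked th ys \<and> hd ys = x"
  using assms
proof (induction ws arbitrary: x)
  case Nil
  then show ?case by (auto intro!: exI[of _ "[x]"] fcong.refl)
next
  case (Cons w ws)
  define t where "t = th w x"
  have P: "w \<in> P" "t \<in> P" "set ws \<subseteq> P" using Cons.prems by (simp_all add: t_def)
  obtain ys where ys: "fcong P th dl (t # ws) ys" "theta_linked th ys" "hd ys = t"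
    using Cons.IH[OF P(2,3)] by blast
  obtain r where r: "ys = t # r" using ys(3) fcong_words[OF ys(1)]
    by (cases ys) (auto simp: in_words_iff)
  have "fcong P th dl (x # w # ws) (x # t # ws)"
    using fcong.ctx[OF fcong.rel_th[of x P w], of "[]" ws] Cons.prems P by (simp add: t_def)
  also have "fcong P th dl (x # t # ws) (x # ys)"
    using fcong.ctx[OF ys(1), of "[x]" "[]"] Cons.prems by simp
  finally have "fcong P th dl (x # w # ws) (x # ys)" .
  moreover have "th t x = t" using th_th_absorb[of x w] Cons.prems P by (simp add: t_def)
  ultimately show ?case using ys(2) r by (intro exI[of _ "x # ys"]) simp
qed

lemma delta_sweep:
  assumes "theta_linked th ys" "ys \<in> words P"
  shows "\<exists>c. fchain P th dl c \<and> fcong P th dl ys c \<and> dl (hd ys) (hd c) = hd c"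
  using assms
proof (induction ys rule: induct_list012)
  case (2 x)
  then show ?case by (auto intro!: exI[of _ "[x]"] fcong.refl)
next
  case (3 x y ys)
  have x: "x \<in> P" and yys: "y # ys \<in> words P" using "3.prems"(2) by (simp_all add: in_words_iff)
  have linked: "th y x = y" "theta_linked th (y # ys)" using "3.prems"(1) by simp_all
  obtain c where c: "fchain P th dl c" "fcong P th dl (y # ys) c" "dl y (hd c) = hd c"
    using "3.IH"(2)[OF linked(2) yys] by auto
  obtain c1 ct where c1: "c = c1 # ct" using c(1) by (cases c) (auto simp: fchain_def)
  have P: "y \<in> P" "c1 \<in> P" "set ct \<subseteq> P" using yys c(1) c1 by (auto simp: fchain_def in_words_iff)
  define c0 where "c0 = dl x c1"
  have "th c1 x = c1" using th_fixed_below[of c1 y x] P x c(3) c1 linked(1) by simp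
  then have "Frel th dl c0 c1"
    using dl_dl_reduce[of x c1 c1] th_dl_eq_th[of x c1] x P by (simp add: Frel_iff c0_def)
  then have chain: "fchain P th dl (c0 # c)"
    using c(1) c1 x P by (simp add: fchain_Cons_Cons_iff c0_def)
  have "fcong P th dl (x # y # ys) (x # c)"
    using fcong.ctx[OF c(2), of "[x]" "[]"] x by simp
  also have "fcong P th dl (x # c) (c0 # c)"
    using fcong.ctx[OF fcong.rel_dl[where th = th and dl = dl, OF x P(2)], of "[]" ct] P c1
    by (simp add: c0_def)
  finally show ?case using chain x P c1 by (intro exI[of _ "c0 # c"]) (simp add: c0_def)
qed (simp add: in_words_iff)

lemma ex_fchain_fcong: "w \<in> words P \<Longrightarrow> \<exists>c. fchain P th dl c \<and> fcong P th dl w c"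
proof -
  assume w: "w \<in> words P"
  then obtain x ws where xws: "w = x # ws" "x \<in> P" "set ws \<subseteq> P"
    by (cases w) (auto simp: in_words_iff)
  obtain ys where ys: "fcong P th dl w ys" "theta_linked th ys"
    using theta_sweep[OF xws(2,3)] xws(1) by blast
  obtain c where c: "fchain P th dl c" "fcong P th dl ys c"
    using delta_sweep[OF ys(2)] fcong_words[OF ys(1)] by blast
  have "fcong P th dl w c" using ys(1) c(2) by (rule fcong.trans)
  then show ?thesis using c(1) by blast
qed

lemma fcong_fchain_ends:
  assumes "fchain P th dl c" "fcong P th dl w c"
  shows "word_D dl w = hd c" "word_R th w = last c"
  using same_action_word_D_word_R[OF _ _ fcong_same_action[OF assms(2)]]
    fcong_words[OF assms(2)] fchain_word_D_word_R[OF assms(1)] by simp_all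

lemma fcong_word_D_Cons: "w \<in> words P \<Longrightarrow> fcong P th dl (word_D dl w # w) w"
proof -
  assume w: "w \<in> words P"
  obtain c where c: "fchain P th dl c" "fcong P th dl w c" using ex_fchain_fcong[OF w] by blast
  obtain h t where ht: "c = h # t" "h \<in> P" "set t \<subseteq> P"
    using c(1) by (cases c) (auto simp: fchain_def)
  have "fcong P th dl (word_D dl w # w) (h # c)"
    using fcong.ctx[OF c(2), of "[h]" "[]"] ht fcong_fchain_ends(1)[OF c] by simp
  also have "fcong P th dl (h # c) c"
    using fcong.ctx[OF fcong.rel_idem[OF ht(2)], of "[]" t] ht by simp
  also have "fcong P th dl c w" using c(2) by (rule fcong.sym)
  finally show ?thesis .
qed

lemma fcong_snoc_word_R: "w \<in> words P \<Longrightarrow> fcong P th dl (w @ [word_R th w]) w"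
proof -
  assume w: "w \<in> words P"
  obtain c where c: "fchain P th dl c" "fcong P th dl w c" using ex_fchain_fcong[OF w] by blast
  obtain b l where bl: "c = b @ [l]" "l \<in> P" "set b \<subseteq> P"
    using c(1) by (cases c rule: rev_cases) (auto simp: fchain_def)
  have "fcong P th dl (w @ [word_R th w]) (c @ [l])"
    using fcong.ctx[OF c(2), of "[]" "[l]"] bl fcong_fchain_ends(2)[OF c] by simp
  also have "fcong P th dl (c @ [l]) c"
    using fcong.ctx[OF fcong.rel_idem[OF bl(2)], of b "[]"] bl by simp
  also have "fcong P th dl c w" using c(2) by (rule fcong.sym)
  finally show ?thesis .
qed

lemma fcong_below_sandwich:
  assumes x: "x \<in> P" and d: "d \<in> P" and below: "dl d x = x"
  shows "fcong P th dl [d, x, d] [x]"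
proof -
  have "fcong P th dl [d, x, d] [x, x, d]"
    using fcong.ctx[OF fcong.rel_dl[where th = th and dl = dl, OF d x], of "[]" "[d]"] below d by simp
  also have "fcong P th dl \<dots> [x, d]"
    using fcong.ctx[OF fcong.rel_idem[OF x], of "[]" "[d]"] d by simp
  also have "fcong P th dl \<dots> [x, x]"
    using fcong.rel_th[where th = th and dl = dl, OF x d] th_fixed_if_dl_fixed[OF d x below] by simp
  also have "fcong P th dl \<dots> [x]" using fcong.rel_idem[OF x] .
  finally show ?thesis .
qed

end

(* F(P) and M(P) are both of this form: quotients of the nonempty words by a congruence that
   contains the defining relations of F(P) and is contained in equality of actions. *)

locale word_quotient = proj_algebra P th dl
  for P :: "'a set" and th dl :: "'a \<Rightarrow> 'a \<Rightarrow> 'a" +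
  fixes S :: "'s set" and mult :: "'s \<Rightarrow> 's \<Rightarrow> 's" and cl :: "'a list \<Rightarrow> 's"
  assumes carrier_eq: "S = cl ` words P"
    and cl_append: "u \<in> words P \<Longrightarrow> v \<in> words P \<Longrightarrow> mult (cl u) (cl v) = cl (u @ v)"
    and cl_eq_if_fcong: "fcong P th dl u v \<Longrightarrow> cl u = cl v"
    and same_action_if_cl_eq:
      "u \<in> words P \<Longrightarrow> v \<in> words P \<Longrightarrow> cl u = cl v \<Longrightarrow> same_action P th dl u v"
begin

abbreviation D :: "'s \<Rightarrow> 's" where "D \<equiv> chainD P th dl (\<lambda>p. cl [p]) cl"

abbreviation R :: "'s \<Rightarrow> 's" where "R \<equiv> chainR P th dl (\<lambda>p. cl [p]) cl"

lemma cl_in_carrier: "u \<in> words P \<Longrightarrow> cl u \<in> S"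
  by (simp add: carrier_eq)

lemma ball_carrier_iff: "(\<forall>a\<in>S. Q a) \<longleftrightarrow> (\<forall>u\<in>words P. Q (cl u))"
  by (simp add: carrier_eq)

lemma word_D_word_R_eq_if_cl_eq:
  "u \<in> words P \<Longrightarrow> v \<in> words P \<Longrightarrow> cl u = cl v \<Longrightarrow>
    word_D dl u = word_D dl v \<and> word_R th u = word_R th v"
  using same_action_if_cl_eq same_action_word_D_word_R by blast

lemma D_cl: "u \<in> words P \<Longrightarrow> D (cl u) = cl [word_D dl u]"
proof -
  assume u: "u \<in> words P"
  obtain c where c: "fchain P th dl c" "fcong P th dl u c" using ex_fchain_fcong[OF u] by blast
  have "(THE p. \<exists>ps. fchain P th dl ps \<and> hd ps = p \<and> cl ps = cl u) = word_D dl u"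
  proof (rule the_equality)
    have "hd c = word_D dl u" "cl c = cl u"
      using fcong_fchain_ends(1)[OF c] cl_eq_if_fcong[OF c(2)] by simp_all
    then show "\<exists>ps. fchain P th dl ps \<and> hd ps = word_D dl u \<and> cl ps = cl u"
      using c(1) by blast
  next
    fix p assume "\<exists>ps. fchain P th dl ps \<and> hd ps = p \<and> cl ps = cl u"
    then obtain ps where ps: "fchain P th dl ps" "hd ps = p" "cl ps = cl u" by blast
    have "word_D dl ps = word_D dl u"
      using word_D_word_R_eq_if_cl_eq[OF fchain_in_words[OF ps(1)] u ps(3)] by simp
    then show "p = word_D dl u" using fchain_word_D_word_R[OF ps(1)] ps(2) by simp
  qed
  then show ?thesis by (simp add: chainD_def)
qed

lemma R_cl: "u \<in> words P \<Longrightarrow> R (cl u) = cl [word_R th u]"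
proof -
  assume u: "u \<in> words P"
  obtain c where c: "fchain P th dl c" "fcong P th dl u c" using ex_fchain_fcong[OF u] by blast
  have "(THE p. \<exists>ps. fchain P th dl ps \<and> last ps = p \<and> cl ps = cl u) = word_R th u"
  proof (rule the_equality)
    have "last c = word_R th u" "cl c = cl u"
      using fcong_fchain_ends(2)[OF c] cl_eq_if_fcong[OF c(2)] by simp_all
    then show "\<exists>ps. fchain P th dl ps \<and> last ps = word_R th u \<and> cl ps = cl u"
      using c(1) by blast
  next
    fix p assume "\<exists>ps. fchain P th dl ps \<and> last ps = p \<and> cl ps = cl u"
    then obtain ps where ps: "fchain P th dl ps" "last ps = p" "cl ps = cl u" by blast
    have "word_R th ps = word_R th u"
      using word_D_word_R_eq_if_cl_eq[OF fchain_in_words[OF ps(1)] u ps(3)] by simp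
    then show "p = word_R th u" using fchain_word_D_word_R[OF ps(1)] ps(2) by simp
  qed
  then show ?thesis by (simp add: chainR_def)
qed

lemma semigroup: "semigroup_on S mult"
  unfolding semigroup_on_def ball_carrier_iff
  by (simp add: cl_append words_append cl_in_carrier)

lemma D_mult_self: "u \<in> words P \<Longrightarrow> mult (D (cl u)) (cl u) = cl u"
  using cl_append[of "[word_D dl u]" u] cl_eq_if_fcong[OF fcong_word_D_Cons]
  by (simp add: D_cl word_D_closed)

lemma mult_R_self: "u \<in> words P \<Longrightarrow> mult (cl u) (R (cl u)) = cl u"
  using cl_append[of u "[word_R th u]"] cl_eq_if_fcong[OF fcong_snoc_word_R]
  by (simp add: R_cl word_R_closed)

lemma D_mult_D:
  assumes u: "u \<in> words P" and v: "v \<in> words P"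
  shows "D (mult (cl u) (cl v)) = D (mult (cl u) (D (cl v)))"
proof -
  have d: "[word_D dl v] \<in> words P" using v by (simp add: word_D_closed)
  have "word_D dl (u @ v) = word_D dl (u @ [word_D dl v])"
    using v word_D_closed[OF v] by (simp add: word_D_append word_D_snoc in_words_iff)
  then show ?thesis using u v d by (simp add: D_cl cl_append words_append)
qed

lemma R_mult_R:
  assumes u: "u \<in> words P" and v: "v \<in> words P"
  shows "R (mult (cl u) (cl v)) = R (mult (R (cl u)) (cl v))"
proof -
  have r: "[word_R th u] \<in> words P" using u by (simp add: word_R_closed)
  have "word_R th (u @ v) = word_R th ([word_R th u] @ v)"
    using u word_R_closed[OF u] by (simp add: word_R_append word_R_Cons in_words_iff)
  then show ?thesis using u v r by (simp add: R_cl cl_append words_append in_words_iff)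
qed

lemma D_mult_sandwich:
  assumes u: "u \<in> words P" and v: "v \<in> words P"
  shows "D (mult (cl u) (cl v)) = mult (mult (D (cl u)) (D (mult (cl u) (cl v)))) (D (cl u))"
proof -
  let ?d = "word_D dl u" and ?x = "word_D dl (u @ v)"
  have P: "?d \<in> P" "?x \<in> P" using u v by (simp_all add: word_D_closed words_append)
  have "dl ?d ?x = ?x"
    using delta_word_below_word_D[OF u word_D_closed[OF v]] v by (simp add: word_D_append in_words_iff)
  then have "cl [?d, ?x, ?d] = cl [?x]" using cl_eq_if_fcong fcong_below_sandwich P by blast
  then show ?thesis
    using u v P cl_append[of "[?d, ?x]" "[?d]"] by (simp add: D_cl cl_append words_append in_words_iff)
qed

lemma R_mult_sandwich:
  assumes u: "u \<in> words P" and v: "v \<in> words P"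
  shows "R (mult (cl u) (cl v)) = mult (mult (R (cl v)) (R (mult (cl u) (cl v)))) (R (cl v))"
proof -
  let ?r = "word_R th v" and ?y = "word_R th (u @ v)"
  have P: "?r \<in> P" "?y \<in> P" using u v by (simp_all add: word_R_closed words_append)
  have "th ?r ?y = ?y"
    using theta_word_below_word_R[OF v word_R_closed[OF u]] u by (simp add: word_R_append in_words_iff)
  then have "dl ?r ?y = ?y" using dl_th_fixed[of ?r ?y] P by simp
  then have "cl [?r, ?y, ?r] = cl [?y]" using cl_eq_if_fcong fcong_below_sandwich P by blast
  then show ?thesis
    using u v P cl_append[of "[?r, ?y]" "[?r]"] by (simp add: R_cl cl_append words_append in_words_iff)
qed

lemma R_D: "u \<in> words P \<Longrightarrow> R (D (cl u)) = D (cl u)"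
  and D_R: "u \<in> words P \<Longrightarrow> D (R (cl u)) = R (cl u)"
  by (simp_all add: D_cl R_cl word_D_closed word_R_closed)

lemma D_in_carrier: "u \<in> words P \<Longrightarrow> D (cl u) \<in> S"
  by (simp add: D_cl cl_in_carrier word_D_closed)

lemma R_in_carrier: "u \<in> words P \<Longrightarrow> R (cl u) \<in> S"
  by (simp add: R_cl cl_in_carrier word_R_closed)

theorem drc_semigroup: "drc_semigroup S mult D R"
  unfolding drc_semigroup_def ball_carrier_iff
  by (intro conjI ballI semigroup D_in_carrier R_in_carrier D_mult_self mult_R_self D_mult_D
      R_mult_R D_mult_sandwich R_mult_sandwich R_D D_R)

lemma projs_eq: "projs S D = (\<lambda>p. cl [p]) ` P"
proof
  show "projs S D \<subseteq> (\<lambda>p. cl [p]) ` P"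
    unfolding projs_def carrier_eq by (auto simp: D_cl word_D_closed)
  have "cl [p] = D (cl [p])" if "p \<in> P" for p using that by (simp add: D_cl)
  then show "(\<lambda>p. cl [p]) ` P \<subseteq> projs S D"
    unfolding projs_def carrier_eq by (auto intro!: image_eqI)
qed

theorem proj_generated: "proj_generated S mult D"
proof -
  have "sgen ((\<lambda>p. cl [p]) ` P) mult = cl ` words P"
    by (rule sgen_singletons_eq_image, rule cl_append)
  then show ?thesis unfolding proj_generated_def projs_eq carrier_eq[symmetric] .
qed

theorem pa_iso_projs: "pa_iso P th dl (projs S D) (pth mult R) (pdl mult D)"
  unfolding pa_iso_def
proof (intro exI conjI ballI)
  have "inj_on (\<lambda>p. cl [p]) P"
    using word_D_word_R_eq_if_cl_eq[of "[p]" "[q]" for p q] by (auto intro!: inj_onI)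
  then show "bij_betw (\<lambda>p. cl [p]) P (projs S D)" by (simp add: bij_betw_def projs_eq)
  fix p q assume "p \<in> P" "q \<in> P"
  then show "cl [th p q] = pth mult R (cl [p]) (cl [q])"
    and "cl [dl p q] = pdl mult D (cl [p]) (cl [q])"
    by (simp_all add: pth_def pdl_def cl_append R_cl D_cl word_R_def word_D_def in_words_iff)
qed

end

lemma fclass_eq_if_fcong: "fcong P th dl u v \<Longrightarrow> fclass P th dl u = fclass P th dl v"
  unfolding fclass_def by (blast intro: fcong.trans fcong.sym)

lemma fcong_if_fclass_eq:
  assumes "v \<in> words P" "fclass P th dl u = fclass P th dl v"
  shows "fcong P th dl u v"
proof -
  have "fcong P th dl v v" using assms(1) by (simp add: fcong.refl in_words_iff)
  then show ?thesis using assms(2) unfolding fclass_def by blast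
qed

lemma (in proj_algebra) Fmult_fclass:
  assumes u: "u \<in> words P" and v: "v \<in> words P"
  shows "Fmult P th dl (fclass P th dl u) (fclass P th dl v) = fclass P th dl (u @ v)"
proof -
  define a where "a = (SOME a. a \<in> fclass P th dl u)"
  define b where "b = (SOME b. b \<in> fclass P th dl v)"
  have "u \<in> fclass P th dl u" "v \<in> fclass P th dl v"
    using u v by (simp_all add: fclass_def fcong.refl in_words_iff)
  then have a: "fcong P th dl u a" and b: "fcong P th dl v b"
    unfolding a_def b_def by (metis fclass_def mem_Collect_eq someI)+
  have "fcong P th dl (a @ b) (u @ b)"
    using fcong.ctx[OF fcong.sym[OF a], of "[]" b] fcong_words[OF b] by (simp add: in_words_iff)
  also have "fcong P th dl (u @ b) (u @ v)"
    using fcong.ctx[OF fcong.sym[OF b], of u "[]"] u by (simp add: in_words_iff)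
  finally show ?thesis unfolding Fmult_def a_def[symmetric] b_def[symmetric]
    by (rule fclass_eq_if_fcong)
qed

lemma (in proj_algebra) F_word_quotient:
  "word_quotient P th dl (Fcar P th dl) (Fmult P th dl) (fclass P th dl)"
proof unfold_locales
  show "Fcar P th dl = fclass P th dl ` words P" by (auto simp: Fcar_def in_words_iff)
  show "Fmult P th dl (fclass P th dl u) (fclass P th dl v) = fclass P th dl (u @ v)"
    if "u \<in> words P" "v \<in> words P" for u v
    using that by (rule Fmult_fclass)
  show "fclass P th dl u = fclass P th dl v" if "fcong P th dl u v" for u v
    using that by (rule fclass_eq_if_fcong)
  show "same_action P th dl u v"
    if "u \<in> words P" "v \<in> words P" "fclass P th dl u = fclass P th dl v" for u v
    using fcong_same_action fcong_if_fclass_eq that by blast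
qed

definition word_action :: "'a set \<Rightarrow> ('a \<Rightarrow> 'a \<Rightarrow> 'a) \<Rightarrow> ('a \<Rightarrow> 'a \<Rightarrow> 'a) \<Rightarrow> 'a list \<Rightarrow>
    ('a \<Rightarrow> 'a) \<times> ('a \<Rightarrow> 'a)" where
  "word_action P th dl w = (restrict (theta_word th w) P, restrict (delta_word dl w) P)"

lemma word_action_eq_iff: "word_action P th dl u = word_action P th dl v \<longleftrightarrow> same_action P th dl u v"
proof
  assume "word_action P th dl u = word_action P th dl v"
  then have "restrict (theta_word th u) P = restrict (theta_word th v) P"
    "restrict (delta_word dl u) P = restrict (delta_word dl v) P"
    by (simp_all add: word_action_def)
  then show "same_action P th dl u v" unfolding same_action_def by (metis restrict_apply')
qed (auto simp: word_action_def same_action_def intro!: restrict_ext)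

lemma (in proj_algebra) Mmult_word_action:
  "set u \<subseteq> P \<Longrightarrow> set v \<subseteq> P \<Longrightarrow>
    Mmult P (word_action P th dl u) (word_action P th dl v) = word_action P th dl (u @ v)"
  by (auto simp: Mmult_def word_action_def compose_def restrict_def fun_eq_iff)

lemma hat_eq_word_action: "hat P th dl p = word_action P th dl [p]"
  by (simp add: hat_def word_action_def restrict_def fun_eq_iff)

lemma hat_eq_Mword_singleton: "hat P th dl = (\<lambda>p. Mword P th dl [p])"
  by (simp add: Mword_def fun_eq_iff)

lemma (in proj_algebra) Mword_eq_word_action: "w \<in> words P \<Longrightarrow> Mword P th dl w = word_action P th dl w"
proof -
  assume "w \<in> words P"
  then have "w \<noteq> []" "set w \<subseteq> P" by (simp_all add: in_words_iff)
  then show ?thesis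
  proof (induction w rule: rev_nonempty_induct)
    case (single p)
    then show ?case by (simp add: Mword_def hat_eq_word_action)
  next
    case (snoc q w)
    have "Mword P th dl (w @ [q]) = Mmult P (Mword P th dl w) (hat P th dl q)"
      using snoc.hyps by (cases w) (simp_all add: Mword_def)
    also have "\<dots> = word_action P th dl (w @ [q])"
      using snoc Mmult_word_action[of w "[q]"] by (simp add: hat_eq_word_action)
    finally show ?case .
  qed
qed

lemma (in proj_algebra) Mword_append:
  "u \<in> words P \<Longrightarrow> v \<in> words P \<Longrightarrow> Mmult P (Mword P th dl u) (Mword P th dl v) = Mword P th dl (u @ v)"
  by (simp add: Mword_eq_word_action Mmult_word_action words_append in_words_iff)

lemma (in proj_algebra) M_word_quotient:
  "word_quotient P th dl (Mcar P th dl) (Mmult P) (Mword P th dl)"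
proof unfold_locales
  show "Mcar P th dl = Mword P th dl ` words P"
    unfolding Mcar_def hat_eq_Mword_singleton by (rule sgen_singletons_eq_image, rule Mword_append)
  show "Mmult P (Mword P th dl u) (Mword P th dl v) = Mword P th dl (u @ v)"
    if "u \<in> words P" "v \<in> words P" for u v
    using that by (rule Mword_append)
  show "Mword P th dl u = Mword P th dl v" if "fcong P th dl u v" for u v
    using fcong_words[OF that] fcong_same_action[OF that]
    by (simp add: Mword_eq_word_action word_action_eq_iff)
  show "same_action P th dl u v"
    if "u \<in> words P" "v \<in> words P" "Mword P th dl u = Mword P th dl v" for u v
    using that by (simp add: Mword_eq_word_action word_action_eq_iff)
qed

theorem theorem8p9:
  fixes P :: "'a set" and th dl :: "'a \<Rightarrow> 'a \<Rightarrow> 'a"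
  assumes "proj_alg P th dl"
  shows "drc_semigroup (Fcar P th dl) (Fmult P th dl) (FD P th dl) (FR P th dl)
       \<and> proj_generated (Fcar P th dl) (Fmult P th dl) (FD P th dl)
       \<and> drc_semigroup (Mcar P th dl) (Mmult P) (MD P th dl) (MR P th dl)
       \<and> proj_generated (Mcar P th dl) (Mmult P) (MD P th dl)
       \<and> pa_iso (projs (Fcar P th dl) (FD P th dl))
                (pth (Fmult P th dl) (FR P th dl)) (pdl (Fmult P th dl) (FD P th dl))
                (projs (Mcar P th dl) (MD P th dl))
                (pth (Mmult P) (MR P th dl)) (pdl (Mmult P) (MD P th dl))
       \<and> pa_iso (projs (Mcar P th dl) (MD P th dl))
                (pth (Mmult P) (MR P th dl)) (pdl (Mmult P) (MD P th dl))
                P th dl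
       \<and> pa_iso (projs (Fcar P th dl) (FD P th dl))
                (pth (Fmult P th dl) (FR P th dl)) (pdl (Fmult P th dl) (FD P th dl))
                P th dl"
proof -
  interpret proj_algebra P th dl using assms by (rule proj_algebra.intro)
  interpret F: word_quotient P th dl "Fcar P th dl" "Fmult P th dl" "fclass P th dl"
    by (rule F_word_quotient)
  interpret M: word_quotient P th dl "Mcar P th dl" "Mmult P" "Mword P th dl"
    by (rule M_word_quotient)
  have closed: "\<forall>p\<in>P. \<forall>q\<in>P. th p q \<in> P \<and> dl p q \<in> P" by simp
  note F_iso_P = pa_iso_sym[OF closed F.pa_iso_projs]
  note M_iso_P = pa_iso_sym[OF closed M.pa_iso_projs]
  note F_iso_M = pa_iso_trans[OF F_iso_P M.pa_iso_projs]
  show ?thesis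
    unfolding FD_def FR_def MD_def MR_def hat_eq_Mword_singleton
    using F.drc_semigroup F.proj_generated M.drc_semigroup M.proj_generated F_iso_M M_iso_P F_iso_P
    by blast
qed

end
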